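(* Let $B$ be a connected building set on $V=[n]$. Then $$F(P_B)=\sum_{\alpha\models n}\zeta_\alpha(B)M_\alpha,$$ where $\zeta_\alpha(B)$ is the number of splitting chains of $B$ of type $\alpha$.
   Context: A building set on a finite set $V$ is a collection $B$ of nonempty subsets of $V$ such that $\{v\}\in B$ for all $v\in V$ and such that $I,J\in B$, $I\cap J\neq\emptyset$ imply $I\cup J\in B$. It is connected if $V\in B$, and discrete if it consists only of the singletons. For $I\subseteq V$, the restriction is $B|_I=\{J\in B: J\subseteq I\}$ (a building set on $I$) and the contraction is $B/I=\{J\subseteq V\setminus I: J\neq\emptyset,\ J\in B\text{ or }J\cup I'\in B\text{ for some }I'\subseteq I\}$ (a building set on $V\setminus I$). The nestohedron of $B$ is the Minkowski sum $P_B=\sum_{I\in B}\mathrm{Conv}\{e_i: i\in I\}\subset\mathbb{R}^V$. For a convex polytope $Q\subset\mathbb{R}^V$, a function $f:V\to\mathbb{N}=\{1,2,\dots\}$ is $Q$-generic if the linear functional $x\mapsto\sum_{v\in V}f(v)x_v$ attains its maximum over $Q$ at a unique point. Set $F(Q)=\sum_{f\ Q\text{-generic}}\prod_{v\in V}x_{f(v)}$, a formal power series in commuting variables $x_1,x_2,\dots$. For a composition $\alpha=(a_1,\dots,a_k)$ of $n$ (written $\alpha\models n$; $k(\alpha)=k$ is its length), $M_\alpha=\sum_{i_1<\dots<i_k}x_{i_1}^{a_1}\cdots x_{i_k}^{a_k}$ is the monomial quasisymmetric function, with $M_{()}=1$. A splitting chain of $B$ of type $\alpha=(a_1,\dots,a_k)\models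 n$ is a chain $\emptyset=I_0\subsetneq I_1\subsetneq\cdots\subsetneq I_k=V$ such that for every $1\le j\le k$ the building set $(B|_{I_j})/I_{j-1}$ (on $I_j\setminus I_{j-1}$) is discrete and $|I_j\setminus I_{j-1}|=a_j$. *)

theory Defs
  imports "HOL-Analysis.Analysis" "HOL-Library.Set_Algebras"
begin

definition building_set :: "'a set \<Rightarrow> 'a set set \<Rightarrow> bool" where
  "building_set V B \<longleftrightarrow> B \<subseteq> Pow V \<and> (\<forall>I\<in>B. I \<noteq> {}) \<and> (\<forall>v\<in>V. {v} \<in> B)
     \<and> (\<forall>I\<in>B. \<forall>J\<in>B. I \<inter> J \<noteq> {} \<longrightarrow> I \<union> J \<in> B)"

definition connected_bs :: "'a set \<Rightarrow> 'a set set \<Rightarrow> bool" where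
  "connected_bs V B \<longleftrightarrow> V \<in> B"

definition discrete_bs :: "'a set \<Rightarrow> 'a set set \<Rightarrow> bool" where
  "discrete_bs V B \<longleftrightarrow> B = {{v} | v. v \<in> V}"

definition restr_bs :: "'a set set \<Rightarrow> 'a set \<Rightarrow> 'a set set" where
  "restr_bs B I = {J \<in> B. J \<subseteq> I}"

definition contr_bs :: "'a set \<Rightarrow> 'a set set \<Rightarrow> 'a set \<Rightarrow> 'a set set" where
  "contr_bs V B I = {J. J \<subseteq> V - I \<and> J \<noteq> {} \<and> (J \<in> B \<or> (\<exists>I'\<subseteq>I. J \<union> I' \<in> B))}"

definition nestohedron :: "('a::finite) set set \<Rightarrow> (real ^ 'a) set" where
  "nestohedron B = (\<Sum>I\<in>B. convex hull ((\<lambda>i. axis i 1) ` I))"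

definition generic :: "(real ^ ('a::finite)) set \<Rightarrow> ('a \<Rightarrow> nat) \<Rightarrow> bool" where
  "generic Q f \<longleftrightarrow> (\<forall>v. f v \<ge> 1) \<and>
     (\<exists>!x. x \<in> Q \<and> (\<forall>y\<in>Q. (\<Sum>v\<in>UNIV. real (f v) * y $ v) \<le> (\<Sum>v\<in>UNIV. real (f v) * x $ v)))"

(* Formal power series in x_1, x_2, ... with natural coefficients are represented by
   their coefficient functions: a monomial x_1^{m 1} x_2^{m 2} ... is the exponent
   function m :: nat => nat (x_0 does not exist, so monomials have m 0 = 0). *)
type_synonym qsym = "(nat \<Rightarrow> nat) \<Rightarrow> nat"

(* F(Q) = sum over Q-generic f of prod_v x_{f v}; coefficient of m counts the generic f
   whose monomial is m *)
definition F_series :: "(real ^ ('a::finite)) set \<Rightarrow> qsym" where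
  "F_series Q m = card {f. generic Q f \<and> (\<forall>i. card {v. f v = i} = m i)}"

definition compositions :: "nat \<Rightarrow> nat list set" where
  "compositions n = {\<alpha>. (\<forall>a\<in>set \<alpha>. a > 0) \<and> sum_list \<alpha> = n}"

(* monomial quasisymmetric function M_alpha = sum_{i_1<...<i_k} x_{i_1}^{a_1}...x_{i_k}^{a_k} *)
definition monomial_qsym :: "nat list \<Rightarrow> qsym" where
  "monomial_qsym \<alpha> m = (if \<exists>idx :: nat list. sorted_wrt (<) idx \<and> length idx = length \<alpha>
        \<and> (\<forall>j<length \<alpha>. idx ! j \<ge> 1 \<and> m (idx ! j) = \<alpha> ! j)
        \<and> (\<forall>i. i \<notin> set idx \<longrightarrow> m i = 0) then 1 else 0)"

definition splitting_chain :: "'a set \<Rightarrow> 'a set set \<Rightarrow> nat list \<Rightarrow> 'a set list \<Rightarrow> bool" where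
  "splitting_chain V B \<alpha> Is \<longleftrightarrow> length Is = length \<alpha> + 1 \<and> Is ! 0 = {} \<and> Is ! length \<alpha> = V
     \<and> (\<forall>j\<in>{1..length \<alpha>}. Is ! (j - 1) \<subset> Is ! j
          \<and> discrete_bs (Is ! j - Is ! (j - 1)) (contr_bs (Is ! j) (restr_bs B (Is ! j)) (Is ! (j - 1)))
          \<and> card (Is ! j - Is ! (j - 1)) = \<alpha> ! (j - 1))"

definition zeta :: "'a set \<Rightarrow> 'a set set \<Rightarrow> nat list \<Rightarrow> nat" where
  "zeta V B \<alpha> = card {Is. splitting_chain V B \<alpha> Is}"

end

theory Submission
  imports Defs
begin

(*
  A linear functional has a unique maximiser on a
  finite Minkowski sum iff it has one on every summand, and the functional of
  weight f has a unique maximiser on the simplex of I iff f attains its maximum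
  on I at exactly one point.  Hence f is P_B-generic iff f \<ge> 1 and f has a
  strict maximum on every member of B.

  Compressing the values of such an f to 0, ..., k-1 in order gives a
  "ranking" p whose level sets have sizes \<alpha> = (a_1, ..., a_k), the exponents of
  the monomial of f; the chain of sublevel sets {v. p v < j} is a splitting
  chain of type \<alpha>, and every splitting chain arises this way from exactly one
  ranking.  So the coefficient of a monomial with exponent pattern \<alpha> in F(P_B)
  is the number of rankings of type \<alpha>, which is \<zeta>_\<alpha>(B); and M_\<alpha> is the
  indicator of the monomials with exponent pattern \<alpha>.
*)

definition is_maximizer :: "('b \<Rightarrow> real) \<Rightarrow> 'b set \<Rightarrow> 'b \<Rightarrow> bool" where
  "is_maximizer L S x \<longleftrightarrow> x \<in> S \<and> (\<forall>y\<in>S. L y \<le> L x)"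

definition unique_maximizer :: "('b \<Rightarrow> real) \<Rightarrow> 'b set \<Rightarrow> bool" where
  "unique_maximizer L S \<longleftrightarrow> (\<exists>!x. is_maximizer L S x)"

lemma unique_maximizerI:
  "is_maximizer L S x \<Longrightarrow> (\<And>y. is_maximizer L S y \<Longrightarrow> y = x) \<Longrightarrow> unique_maximizer L S"
  unfolding unique_maximizer_def by blast

lemma unique_maximizerD:
  "unique_maximizer L S \<Longrightarrow> is_maximizer L S x \<Longrightarrow> is_maximizer L S y \<Longrightarrow> x = y"
  unfolding unique_maximizer_def by blast

lemma maximizer_sum_iff:
  fixes L :: "'b::real_vector \<Rightarrow> real"
  assumes L: "linear L" and A: "finite A" and x: "\<forall>I\<in>A. is_maximizer L (S I) (x I)"
  shows "is_maximizer L (\<Sum>I\<in>A. S I) y \<longleftrightarrow>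
           (\<exists>s. y = sum s A \<and> (\<forall>I\<in>A. is_maximizer L (S I) (s I)))"
proof
  assume y: "is_maximizer L (\<Sum>I\<in>A. S I) y"
  then obtain s where ys: "y = sum s A" and s: "\<forall>I\<in>A. s I \<in> S I"
    by (auto simp: is_maximizer_def set_sum_alt[OF A])
  have "sum x A \<in> (\<Sum>I\<in>A. S I)"
    using x by (auto simp: set_sum_alt[OF A] is_maximizer_def)
  then have "L (sum x A) \<le> L (sum s A)"
    using y by (simp add: is_maximizer_def ys)
  then have "(\<Sum>I\<in>A. L (x I)) \<le> (\<Sum>I\<in>A. L (s I))"
    by (simp add: linear_sum[OF L])
  moreover have le: "\<forall>I\<in>A. L (s I) \<le> L (x I)"
    using x s by (simp add: is_maximizer_def)
  ultimately have "\<not> (\<exists>I\<in>A. L (s I) < L (x I))"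
    using sum_strict_mono_ex1[OF A le] by linarith
  then have "\<forall>I\<in>A. L (s I) = L (x I)"
    using le by force
  then have "\<forall>I\<in>A. is_maximizer L (S I) (s I)"
    using x s by (simp add: is_maximizer_def)
  then show "\<exists>s. y = sum s A \<and> (\<forall>I\<in>A. is_maximizer L (S I) (s I))"
    using ys by blast
next
  assume "\<exists>s. y = sum s A \<and> (\<forall>I\<in>A. is_maximizer L (S I) (s I))"
  then obtain s where ys: "y = sum s A" and s: "\<forall>I\<in>A. is_maximizer L (S I) (s I)"
    by blast
  have "L z \<le> L y" if "z \<in> (\<Sum>I\<in>A. S I)" for z
  proof -
    obtain t where zt: "z = sum t A" and t: "\<forall>I\<in>A. t I \<in> S I"
      using \<open>z \<in> _\<close> by (auto simp: set_sum_alt[OF A])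
    have "(\<Sum>I\<in>A. L (t I)) \<le> (\<Sum>I\<in>A. L (s I))"
      using s t by (intro sum_mono) (simp add: is_maximizer_def)
    then show ?thesis
      by (simp add: zt ys linear_sum[OF L])
  qed
  moreover have "y \<in> (\<Sum>I\<in>A. S I)"
    using s by (auto simp: ys set_sum_alt[OF A] is_maximizer_def)
  ultimately show "is_maximizer L (\<Sum>I\<in>A. S I) y"
    by (simp add: is_maximizer_def)
qed

(* If the maximiser over the sum is unique, so is the maximiser over each
   summand: exchanging the maximiser of one summand would change the sum. *)
lemma unique_maximizer_summand:
  fixes L :: "'b::real_vector \<Rightarrow> real"
  assumes L: "linear L" and A: "finite A" and x: "\<forall>I\<in>A. is_maximizer L (S I) (x I)"
    and u: "unique_maximizer L (\<Sum>I\<in>A. S I)" and K: "K \<in> A"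
  shows "unique_maximizer L (S K)"
proof (rule unique_maximizerI)
  show "is_maximizer L (S K) (x K)"
    using x K by blast
  fix z assume z: "is_maximizer L (S K) z"
  have "is_maximizer L (\<Sum>I\<in>A. S I) (sum y A)" if "\<forall>I\<in>A. is_maximizer L (S I) (y I)" for y
    using that by (intro maximizer_sum_iff[OF L A x, THEN iffD2] exI[of _ y]) simp
  then have "sum (x(K := z)) A = sum x A"
    using unique_maximizerD[OF u] x z by simp
  moreover have "sum (x(K := z)) (A - {K}) = sum x (A - {K})"
    by (rule sum.cong) auto
  ultimately have "z + sum x (A - {K}) = x K + sum x (A - {K})"
    using sum.remove[OF A K, of "x(K := z)"] sum.remove[OF A K, of x] by simp
  then show "z = x K"
    by simp
qed

lemma unique_maximizer_sum:
  fixes L :: "'b::real_vector \<Rightarrow> real"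
  assumes L: "linear L" and A: "finite A" and ex: "\<forall>I\<in>A. \<exists>x. is_maximizer L (S I) x"
  shows "unique_maximizer L (\<Sum>I\<in>A. S I) \<longleftrightarrow> (\<forall>I\<in>A. unique_maximizer L (S I))"
proof
  obtain x where x: "\<forall>I\<in>A. is_maximizer L (S I) (x I)"
    using ex by metis
  show "unique_maximizer L (\<Sum>I\<in>A. S I) \<Longrightarrow> \<forall>I\<in>A. unique_maximizer L (S I)"
    using unique_maximizer_summand[OF L A x] by blast
  assume u: "\<forall>I\<in>A. unique_maximizer L (S I)"
  have max_x: "is_maximizer L (\<Sum>I\<in>A. S I) (sum x A)"
    using x by (intro maximizer_sum_iff[OF L A x, THEN iffD2] exI[of _ x]) simp
  have "y = sum x A" if y: "is_maximizer L (\<Sum>I\<in>A. S I) y" for y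
  proof -
    obtain s where ys: "y = sum s A" and s: "\<forall>I\<in>A. is_maximizer L (S I) (s I)"
      using maximizer_sum_iff[OF L A x, THEN iffD1, OF y] by blast
    have "\<forall>I\<in>A. s I = x I"
    proof
      fix I assume "I \<in> A"
      then show "s I = x I"
        using u s x by (intro unique_maximizerD[of L "S I"]) auto
    qed
    then show ?thesis
      unfolding ys by simp
  qed
  then show "unique_maximizer L (\<Sum>I\<in>A. S I)"
    by (rule unique_maximizerI[OF max_x])
qed

definition objective :: "('a::finite \<Rightarrow> nat) \<Rightarrow> real ^ 'a \<Rightarrow> real" where
  "objective f y = (\<Sum>v\<in>UNIV. real (f v) * y $ v)"

definition strict_max :: "'a set \<Rightarrow> ('a \<Rightarrow> nat) \<Rightarrow> bool" where
  "strict_max K p \<longleftrightarrow> (\<exists>v\<in>K. \<forall>w\<in>K. w \<noteq> v \<longrightarrow> p w < p v)"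

(* The standard simplex of the coordinates in I; it contains
   conv{e_i : i \<in> I} and is easier to compute with. *)
definition simplex_on :: "('a::finite) set \<Rightarrow> (real ^ 'a) set" where
  "simplex_on I = {y. (\<forall>v. 0 \<le> y $ v) \<and> (\<forall>v. v \<notin> I \<longrightarrow> y $ v = 0) \<and> (\<Sum>v\<in>UNIV. y $ v) = 1}"

lemma linear_objective: "linear (objective f)"
  by (rule linearI) (simp_all add: objective_def sum.distrib sum_distrib_left algebra_simps)

lemma objective_axis: "objective f (axis i 1) = real (f i)"
proof -
  have "objective f (axis i 1) = (\<Sum>v\<in>UNIV. if v = i then real (f i) else 0)"
    unfolding objective_def by (rule sum.cong) (auto simp: axis_def)
  then show ?thesis by simp
qed

lemma convex_simplex_on: "convex (simplex_on I)"
  unfolding convex_def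
proof (intro ballI allI impI)
  fix x y :: "real ^ 'a" and u v :: real
  assume "x \<in> simplex_on I" "y \<in> simplex_on I" "0 \<le> u" "0 \<le> v" "u + v = 1"
  moreover have "(\<Sum>w\<in>UNIV. (u *\<^sub>R x + v *\<^sub>R y) $ w)
      = u * (\<Sum>w\<in>UNIV. x $ w) + v * (\<Sum>w\<in>UNIV. y $ w)"
    by (simp add: sum.distrib sum_distrib_left)
  ultimately show "u *\<^sub>R x + v *\<^sub>R y \<in> simplex_on I"
    by (simp add: simplex_on_def)
qed

lemma convex_hull_axis_subset: "convex hull ((\<lambda>i. axis i 1) ` I) \<subseteq> simplex_on I"
  by (intro hull_minimal convex_simplex_on) (auto simp: simplex_on_def axis_def)

lemma objective_le_on_simplex:
  assumes "y \<in> simplex_on I" and "\<forall>v\<in>I. f v \<le> c"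
  shows "objective f y \<le> real c"
proof -
  have "objective f y \<le> (\<Sum>v\<in>UNIV. real c * y $ v)"
    unfolding objective_def
  proof (rule sum_mono)
    fix v
    show "real (f v) * y $ v \<le> real c * y $ v"
      using assms by (cases "v \<in> I") (auto simp: simplex_on_def intro: mult_right_mono)
  qed
  also have "\<dots> = real c"
    using assms(1) by (simp add: simplex_on_def flip: sum_distrib_left)
  finally show ?thesis .
qed

lemma objective_eq_on_simplex:
  assumes y: "y \<in> simplex_on I" and v0: "v0 \<in> I" and strict: "\<forall>w\<in>I. w \<noteq> v0 \<longrightarrow> f w < f v0"
    and ge: "real (f v0) \<le> objective f y"
  shows "y = axis v0 1"
proof -
  let ?gap = "\<lambda>v. (real (f v0) - real (f v)) * y $ v"
  have gap_nonneg: "\<forall>v. 0 \<le> ?gap v"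
  proof
    fix v
    show "0 \<le> ?gap v"
      using y strict v0 by (cases "v \<in> I"; cases "v = v0") (auto simp: simplex_on_def less_imp_le)
  qed
  have "(\<Sum>v\<in>UNIV. ?gap v) = real (f v0) * (\<Sum>v\<in>UNIV. y $ v) - objective f y"
    by (simp add: objective_def left_diff_distrib sum_subtractf sum_distrib_left)
  also have "\<dots> \<le> 0"
    using y ge by (simp add: simplex_on_def)
  finally have "(\<Sum>v\<in>UNIV. ?gap v) = 0"
    using gap_nonneg by (meson order.antisym sum_nonneg)
  then have gap_zero: "\<forall>v. ?gap v = 0"
    using gap_nonneg by (simp add: sum_nonneg_eq_0_iff)
  have zero: "y $ v = 0" if "v \<noteq> v0" for v
  proof (cases "v \<in> I")
    case True
    then have "f v < f v0"
      using strict that by blast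
    then show ?thesis
      using gap_zero[rule_format, of v] by simp
  next
    case False
    then show ?thesis
      using y by (simp add: simplex_on_def)
  qed
  have "(\<Sum>v\<in>UNIV. y $ v) = y $ v0"
    using zero by (subst sum.remove[of _ v0]) auto
  then have "y $ v0 = 1"
    using y by (simp add: simplex_on_def)
  then show ?thesis
    using zero by (auto simp: vec_eq_iff axis_def)
qed

lemma exists_argmax:
  fixes f :: "'a \<Rightarrow> 'b::linorder"
  assumes "finite I" and "I \<noteq> {}"
  shows "\<exists>a\<in>I. \<forall>v\<in>I. f v \<le> f a"
proof -
  have "Max (f ` I) \<in> f ` I"
    using assms by simp
  then obtain a where "a \<in> I" "f a = Max (f ` I)"
    by auto
  moreover have "\<forall>v\<in>I. f v \<le> Max (f ` I)"
    using assms by simp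
  ultimately show ?thesis
    by metis
qed

lemma maximizer_simplex:
  assumes a: "a \<in> I" and le: "\<forall>v\<in>I. f v \<le> f a"
  shows "is_maximizer (objective f) (convex hull ((\<lambda>i. axis i 1) ` I)) (axis a 1)"
  unfolding is_maximizer_def
proof
  show "axis a 1 \<in> convex hull ((\<lambda>i. axis i 1) ` I)"
    using a by (intro hull_inc) simp
  show "\<forall>y\<in>convex hull ((\<lambda>i. axis i 1) ` I). objective f y \<le> objective f (axis a 1)"
    using convex_hull_axis_subset le by (auto simp: objective_axis intro!: objective_le_on_simplex)
qed

lemma unique_maximizer_simplex:
  fixes I :: "'a::finite set"
  assumes "I \<noteq> {}"
  shows "unique_maximizer (objective f) (convex hull ((\<lambda>i. axis i 1) ` I)) \<longleftrightarrow> strict_max I f"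
proof
  obtain a where a: "a \<in> I" "\<forall>v\<in>I. f v \<le> f a"
    using exists_argmax[OF finite assms] by blast
  assume u: "unique_maximizer (objective f) (convex hull ((\<lambda>i. axis i 1) ` I))"
  have only_a: "w = a" if "w \<in> I" "f w = f a" for w
    using unique_maximizerD[OF u maximizer_simplex maximizer_simplex] a that
    by (simp add: axis_eq_axis)
  show "strict_max I f"
    unfolding strict_max_def
  proof (intro bexI[OF _ a(1)] ballI impI)
    fix w assume "w \<in> I" "w \<noteq> a"
    then show "f w < f a"
      using a only_a by (meson le_less)
  qed
next
  assume "strict_max I f"
  then obtain v0 where v0: "v0 \<in> I" and strict: "\<forall>w\<in>I. w \<noteq> v0 \<longrightarrow> f w < f v0"
    by (auto simp: strict_max_def)
  then have max_v0: "is_maximizer (objective f) (convex hull ((\<lambda>i. axis i 1) ` I)) (axis v0 1)"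
    by (intro maximizer_simplex) (auto simp: le_less)
  show "unique_maximizer (objective f) (convex hull ((\<lambda>i. axis i 1) ` I))"
  proof (rule unique_maximizerI[OF max_v0])
    fix y assume "is_maximizer (objective f) (convex hull ((\<lambda>i. axis i 1) ` I)) y"
    then show "y = axis v0 1"
      using max_v0 convex_hull_axis_subset v0 strict
      by (intro objective_eq_on_simplex[of y I]) (auto simp: is_maximizer_def objective_axis)
  qed
qed

lemma generic_nestohedron_iff:
  fixes B :: "('a::finite) set set"
  assumes bs: "building_set UNIV B"
  shows "generic (nestohedron B) f \<longleftrightarrow> (\<forall>v. 1 \<le> f v) \<and> (\<forall>K\<in>B. strict_max K f)"
proof -
  have nonempty: "\<forall>K\<in>B. K \<noteq> {}"
    using bs by (simp add: building_set_def)
  have "\<forall>K\<in>B. \<exists>x. is_maximizer (objective f) (convex hull ((\<lambda>i. axis i 1) ` K)) x"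
  proof
    fix K assume "K \<in> B"
    then obtain a where "a \<in> K" "\<forall>v\<in>K. f v \<le> f a"
      using nonempty exists_argmax[OF finite, of K f] by blast
    then show "\<exists>x. is_maximizer (objective f) (convex hull ((\<lambda>i. axis i 1) ` K)) x"
      using maximizer_simplex by blast
  qed
  then have "unique_maximizer (objective f) (nestohedron B) \<longleftrightarrow> (\<forall>K\<in>B. strict_max K f)"
    unfolding nestohedron_def using nonempty
    by (simp add: unique_maximizer_sum[OF linear_objective finite] unique_maximizer_simplex)
  then show ?thesis
    by (simp add: generic_def unique_maximizer_def is_maximizer_def objective_def)
qed

definition ranking :: "'a set set \<Rightarrow> nat list \<Rightarrow> ('a \<Rightarrow> nat) set" where
  "ranking B \<alpha> = {p. (\<forall>v. p v < length \<alpha>) \<and> (\<forall>j<length \<alpha>. card {v. p v = j} = \<alpha> ! j)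
                     \<and> (\<forall>K\<in>B. strict_max K p)}"

definition level_chain :: "nat \<Rightarrow> ('a \<Rightarrow> nat) \<Rightarrow> 'a set list" where
  "level_chain k p = map (\<lambda>j. {v. p v < j}) [0..<Suc k]"

definition level_contraction :: "'a set set \<Rightarrow> ('a \<Rightarrow> nat) \<Rightarrow> nat \<Rightarrow> 'a set set" where
  "level_contraction B p i =
     contr_bs {v. p v < Suc i} (restr_bs B {v. p v < Suc i}) {v. p v < i}"

lemma length_level_chain [simp]: "length (level_chain k p) = Suc k"
  by (simp add: level_chain_def)

lemma nth_level_chain [simp]: "j \<le> k \<Longrightarrow> level_chain k p ! j = {v. p v < j}"
  unfolding level_chain_def by (simp del: upt_Suc add: nth_map nth_upt)

lemma top_level_part_singleton:
  assumes sm: "strict_max (J \<union> I') p" and J: "J \<subseteq> {v. p v = i}" "J \<noteq> {}"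
    and I': "I' \<subseteq> {v. p v < i}"
  shows "\<exists>v. J = {v}"
proof -
  obtain v where v: "v \<in> J \<union> I'" and above: "\<forall>w\<in>J \<union> I'. w \<noteq> v \<longrightarrow> p w < p v"
    using sm unfolding strict_max_def by blast
  obtain u where u: "u \<in> J"
    using J by auto
  have "v \<in> J"
  proof (rule ccontr)
    assume "v \<notin> J"
    then have "p v < i" and "p u < p v"
      using v I' above u by auto
    then show False
      using u J by auto
  qed
  have "x = v" if "x \<in> J" for x
  proof (rule ccontr)
    assume "x \<noteq> v"
    then have "p x < p v"
      using above \<open>x \<in> J\<close> by auto
    moreover have "p x = p v"
      using J(1) \<open>x \<in> J\<close> \<open>v \<in> J\<close> by blast
    ultimately show False
      by simp
  qed
  then show ?thesis
    using \<open>v \<in> J\<close> by blast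
qed

lemma level_contraction_discrete:
  assumes bs: "building_set UNIV B" and sm: "\<forall>K\<in>B. strict_max K p"
  shows "discrete_bs {v. p v = i} (level_contraction B p i)"
  unfolding discrete_bs_def
proof (intro set_eqI iffI)
  fix J assume "J \<in> level_contraction B p i"
  then have J: "J \<subseteq> {v. p v = i}" "J \<noteq> {}" and "\<exists>I'\<subseteq>{v. p v < i}. J \<union> I' \<in> B"
    unfolding level_contraction_def contr_bs_def restr_bs_def by (auto intro: exI[of _ "{}"])
  then obtain I' where "I' \<subseteq> {v. p v < i}" and "J \<union> I' \<in> B"
    by blast
  then obtain v where "J = {v}"
    using top_level_part_singleton[of J I' p i] sm J by blast
  then show "J \<in> {{v} |v. v \<in> {v. p v = i}}"
    using J by auto
next
  fix J assume "J \<in> {{v} |v. v \<in> {v. p v = i}}"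
  moreover have "{v} \<in> B" for v
    using bs by (simp add: building_set_def)
  ultimately show "J \<in> level_contraction B p i"
    unfolding level_contraction_def contr_bs_def restr_bs_def by auto
qed

(* Conversely, if all steps are discrete then every K \<in> B has a strict maximum:
   the part of K on its top level i is a member of the step-i contraction,
   hence a singleton. *)
lemma strict_max_of_discrete_levels:
  fixes B :: "('a::finite) set set"
  assumes bs: "building_set UNIV B" and bound: "\<forall>v. p v < k"
    and disc: "\<forall>i<k. discrete_bs {v. p v = i} (level_contraction B p i)" and K: "K \<in> B"
  shows "strict_max K p"
proof -
  have "K \<noteq> {}"
    using bs K by (simp add: building_set_def)
  define i where "i = Max (p ` K)"
  have "i \<in> p ` K" and le_i: "\<forall>w\<in>K. p w \<le> i"
    using \<open>K \<noteq> {}\<close> by (simp_all add: i_def)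
  let ?J = "{w \<in> K. p w = i}"
  have "?J \<in> level_contraction B p i"
  proof -
    have "?J \<union> {w \<in> K. p w < i} = K"
      using le_i by force
    then have "?J \<union> {w \<in> K. p w < i} \<in> restr_bs B {v. p v < Suc i}"
      using K le_i by (auto simp: restr_bs_def less_Suc_eq_le)
    moreover have "?J \<noteq> {}"
      using \<open>i \<in> p ` K\<close> by auto
    ultimately show ?thesis
      unfolding level_contraction_def contr_bs_def
      by (intro CollectI conjI disjI2 exI[of _ "{w \<in> K. p w < i}"]) auto
  qed
  moreover have "i < k"
    using \<open>i \<in> p ` K\<close> bound by auto
  ultimately obtain v where v: "?J = {v}"
    using disc by (auto simp: discrete_bs_def)
  show ?thesis
    unfolding strict_max_def
  proof (intro bexI ballI impI)
    show "v \<in> K"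
      using v by auto
    fix w assume "w \<in> K" "w \<noteq> v"
    then show "p w < p v"
      using v le_i by (metis (mono_tags, lifting) le_neq_implies_less mem_Collect_eq singleton_iff)
  qed
qed

lemma splitting_chain_level_chain_iff:
  fixes B :: "('a::finite) set set"
  assumes bs: "building_set UNIV B" and pos: "\<forall>a\<in>set \<alpha>. 0 < a"
    and bound: "\<forall>v. p v < length \<alpha>"
  shows "splitting_chain UNIV B \<alpha> (level_chain (length \<alpha>) p) \<longleftrightarrow> p \<in> ranking B \<alpha>"
proof -
  let ?k = "length \<alpha>"
  have reindex: "(\<forall>j\<in>{1..?k}. Q j) \<longleftrightarrow> (\<forall>i<?k. Q (Suc i))" for Q
  proof
    assume Q: "\<forall>i<?k. Q (Suc i)"
    show "\<forall>j\<in>{1..?k}. Q j"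
    proof
      fix j assume "j \<in> {1..?k}"
      then obtain i where "j = Suc i" and "i < ?k"
        by (cases j) auto
      then show "Q j"
        using Q by simp
    qed
  qed auto
  have step_diff: "{v. p v < Suc i} - {v. p v < i} = {v. p v = i}" for i
    by auto
  have nonempty_level: "{v. p v < i} \<subset> {v. p v < Suc i}"
    if "i < ?k" and "card {v. p v = i} = \<alpha> ! i" for i
  proof -
    have "{v. p v = i} \<noteq> {}"
      using that pos by (metis card.empty nth_mem not_less0)
    then show ?thesis
      by auto
  qed
  have "splitting_chain UNIV B \<alpha> (level_chain ?k p) \<longleftrightarrow>
          (\<forall>i<?k. {v. p v < i} \<subset> {v. p v < Suc i}
                 \<and> discrete_bs {v. p v = i} (level_contraction B p i) \<and> card {v. p v = i} = \<alpha> ! i)"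
    unfolding splitting_chain_def reindex using bound
    by (auto simp: step_diff level_contraction_def)
  also have "\<dots> \<longleftrightarrow>
          (\<forall>i<?k. discrete_bs {v. p v = i} (level_contraction B p i) \<and> card {v. p v = i} = \<alpha> ! i)"
    using nonempty_level by blast
  also have "\<dots> \<longleftrightarrow> p \<in> ranking B \<alpha>"
    using level_contraction_discrete[OF bs] strict_max_of_discrete_levels[OF bs bound]
    by (auto simp: ranking_def bound)
  finally show ?thesis .
qed

lemma chain_mono:
  assumes "\<forall>j\<in>{1..k}. (Is :: 'a set list) ! (j - 1) \<subseteq> Is ! j" and "a \<le> b" and "b \<le> k"
  shows "Is ! a \<subseteq> Is ! b"
  using assms(2,3)
proof (induction b)
  case (Suc b)
  then show ?case
    using assms(1) by (cases "a = Suc b") force+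
qed simp

(* Every splitting chain is the level chain of some p, namely p(v) = the least
   j with v \<in> I_(j+1). *)
lemma splitting_chain_is_level_chain:
  assumes "splitting_chain UNIV B \<alpha> Is"
  shows "\<exists>p. (\<forall>v. p v < length \<alpha>) \<and> Is = level_chain (length \<alpha>) p"
proof -
  let ?k = "length \<alpha>"
  have len: "length Is = Suc ?k" and first: "Is ! 0 = {}" and last: "Is ! ?k = UNIV"
    and steps: "\<forall>j\<in>{1..?k}. Is ! (j - 1) \<subseteq> Is ! j"
    using assms unfolding splitting_chain_def by auto
  have "?k \<noteq> 0"
    using first last by auto
  define p where "p v = (LEAST j. v \<in> Is ! Suc j)" for v
  have least: "v \<in> Is ! Suc (p v)" for v
  proof -
    have "v \<in> Is ! Suc (?k - 1)"
      using last \<open>?k \<noteq> 0\<close> by simp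
    then show ?thesis
      unfolding p_def by (rule LeastI)
  qed
  have mem: "v \<in> Is ! j \<longleftrightarrow> p v < j" if "j \<le> ?k" for v j
  proof
    assume "v \<in> Is ! j"
    then obtain i where "j = Suc i"
      using first by (cases j) auto
    then have "p v \<le> i"
      unfolding p_def using \<open>v \<in> Is ! j\<close> by (intro Least_le) simp
    then show "p v < j"
      using \<open>j = Suc i\<close> by simp
  next
    assume "p v < j"
    then show "v \<in> Is ! j"
      using chain_mono[OF steps, of "Suc (p v)" j] that least by auto
  qed
  have "Is = level_chain ?k p"
    using len mem by (intro nth_equalityI) auto
  moreover have "\<forall>v. p v < ?k"
    using mem[of ?k] last by auto
  ultimately show ?thesis
    by blast
qed

lemma inj_on_level_chain: "inj_on (level_chain k) {p. \<forall>v. p v < k}"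
proof (rule inj_onI)
  fix p q assume p: "p \<in> {p. \<forall>v. p v < k}" and q: "q \<in> {p. \<forall>v. p v < k}"
    and eq: "level_chain k p = level_chain k q"
  show "p = q"
  proof
    fix v
    have "level_chain k p ! Suc (p v) = level_chain k q ! Suc (p v)"
      and "level_chain k p ! Suc (q v) = level_chain k q ! Suc (q v)"
      using eq by simp_all
    then have "{w. p w < Suc (p v)} = {w. q w < Suc (p v)}"
      and "{w. p w < Suc (q v)} = {w. q w < Suc (q v)}"
      using p q by (simp_all add: Suc_le_eq)
    then have "q v < Suc (p v)" and "p v < Suc (q v)"
      by (metis lessI mem_Collect_eq)+
    then show "p v = q v"
      by simp
  qed
qed

(* Hence \<zeta>_\<alpha>(B) counts the rankings of type \<alpha>: the level chain is a bijection
   from rankings onto splitting chains. *)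
lemma zeta_eq_card_ranking:
  fixes B :: "('a::finite) set set"
  assumes bs: "building_set UNIV B" and pos: "\<forall>a\<in>set \<alpha>. 0 < a"
  shows "zeta UNIV B \<alpha> = card (ranking B \<alpha>)"
proof -
  have "level_chain (length \<alpha>) ` ranking B \<alpha> = {Is. splitting_chain UNIV B \<alpha> Is}"
  proof (intro set_eqI iffI)
    fix Is assume "Is \<in> level_chain (length \<alpha>) ` ranking B \<alpha>"
    then obtain p where "p \<in> ranking B \<alpha>" and "Is = level_chain (length \<alpha>) p"
      by blast
    then show "Is \<in> {Is. splitting_chain UNIV B \<alpha> Is}"
      using splitting_chain_level_chain_iff[OF bs pos] by (simp add: ranking_def)
  next
    fix Is assume "Is \<in> {Is. splitting_chain UNIV B \<alpha> Is}"
    then obtain p where "\<forall>v. p v < length \<alpha>" and Is: "Is = level_chain (length \<alpha>) p"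
      using splitting_chain_is_level_chain by blast
    then have "p \<in> ranking B \<alpha>"
      using splitting_chain_level_chain_iff[OF bs pos] \<open>Is \<in> _\<close> by simp
    then show "Is \<in> level_chain (length \<alpha>) ` ranking B \<alpha>"
      unfolding Is by (rule imageI)
  qed
  moreover have "inj_on (level_chain (length \<alpha>)) (ranking B \<alpha>)"
    using inj_on_level_chain by (rule inj_on_subset) (auto simp: ranking_def)
  ultimately show ?thesis
    unfolding zeta_def by (metis card_image)
qed

definition monomial_of :: "('a \<Rightarrow> nat) \<Rightarrow> nat \<Rightarrow> nat" where
  "monomial_of f i = card {v. f v = i}"

definition exponent_pattern :: "nat list \<Rightarrow> (nat \<Rightarrow> nat) \<Rightarrow> nat list \<Rightarrow> bool" where
  "exponent_pattern \<alpha> m idx \<longleftrightarrow> sorted_wrt (<) idx \<and> length idx = length \<alpha>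
     \<and> (\<forall>j<length \<alpha>. 1 \<le> idx ! j \<and> m (idx ! j) = \<alpha> ! j) \<and> (\<forall>i. i \<notin> set idx \<longrightarrow> m i = 0)"

lemma F_series_eq: "F_series Q m = card {f. generic Q f \<and> monomial_of f = m}"
  by (simp add: F_series_def monomial_of_def fun_eq_iff)

lemma monomial_qsym_eq:
  "monomial_qsym \<alpha> m = (if \<exists>idx. exponent_pattern \<alpha> m idx then 1 else 0)"
  by (simp add: monomial_qsym_def exponent_pattern_def)

lemma finite_compositions: "finite (compositions n)"
proof (rule finite_subset)
  have "length \<alpha> \<le> sum_list \<alpha>" if "\<forall>a\<in>set \<alpha>. 0 < a" for \<alpha> :: "nat list"
    using that by (induction \<alpha>) auto
  then show "compositions n \<subseteq> {\<alpha>. set \<alpha> \<subseteq> {..n} \<and> length \<alpha> \<le> n}"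
    unfolding compositions_def using member_le_sum_list by fastforce
  show "finite {\<alpha>. set \<alpha> \<subseteq> {..n} \<and> length \<alpha> \<le> n}"
    by (rule finite_lists_length_le) simp
qed

(* A monomial has at most one exponent pattern with positive exponents: idx is
   its support and \<alpha> the list of its exponents. *)
lemma exponent_pattern_unique:
  assumes pos_\<alpha>: "\<forall>a\<in>set \<alpha>. 0 < a" and pos_\<beta>: "\<forall>b\<in>set \<beta>. 0 < b"
    and pat_\<alpha>: "exponent_pattern \<alpha> m idx" and pat_\<beta>: "exponent_pattern \<beta> m idx'"
  shows "\<alpha> = \<beta>"
proof -
  have support: "set ix = {i. m i \<noteq> 0}"
    if pos: "\<forall>a\<in>set \<gamma>. 0 < a" and pat: "exponent_pattern \<gamma> m ix" for \<gamma> ix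
  proof (intro set_eqI iffI)
    fix i assume "i \<in> set ix"
    then obtain j where "j < length \<gamma>" and "ix ! j = i"
      using pat by (auto simp: in_set_conv_nth exponent_pattern_def)
    then show "i \<in> {i. m i \<noteq> 0}"
      using pos pat by (auto simp: exponent_pattern_def)
  qed (use pat in \<open>auto simp: exponent_pattern_def\<close>)
  have exponents: "\<gamma> = map m ix" if "exponent_pattern \<gamma> m ix" for \<gamma> ix
    using that by (intro nth_equalityI) (auto simp: exponent_pattern_def)
  have "idx = idx'"
    using support[OF pos_\<alpha> pat_\<alpha>] support[OF pos_\<beta> pat_\<beta>] pat_\<alpha> pat_\<beta>
    by (intro strict_sorted_equal) (auto simp: exponent_pattern_def)
  then show ?thesis
    using exponents[OF pat_\<alpha>] exponents[OF pat_\<beta>] by simp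
qed

lemma sum_monomial_qsym_collapse:
  assumes \<alpha>: "\<alpha> \<in> compositions n" and pat: "exponent_pattern \<alpha> m idx"
  shows "(\<Sum>\<beta>\<in>compositions n. c \<beta> * monomial_qsym \<beta> m) = c \<alpha>"
proof -
  have "monomial_qsym \<beta> m = (if \<beta> = \<alpha> then 1 else 0)" if "\<beta> \<in> compositions n" for \<beta>
    using that \<alpha> pat exponent_pattern_unique[of \<beta> \<alpha> m]
    by (auto simp: monomial_qsym_eq compositions_def)
  then have "(\<Sum>\<beta>\<in>compositions n. c \<beta> * monomial_qsym \<beta> m)
      = (\<Sum>\<beta>\<in>compositions n. if \<beta> = \<alpha> then c \<beta> else 0)"
    by (intro sum.cong) auto
  also have "\<dots> = c \<alpha>"
    using \<alpha> finite_compositions by (simp add: sum.delta)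
  finally show ?thesis .
qed

lemma exists_exponent_pattern:
  fixes f :: "'a::finite \<Rightarrow> nat"
  assumes pos: "\<forall>v. 1 \<le> f v"
  shows "\<exists>\<alpha>\<in>compositions CARD('a). \<exists>idx. exponent_pattern \<alpha> (monomial_of f) idx"
proof -
  define idx where "idx = sorted_list_of_set (range f)"
  define \<alpha> where "\<alpha> = map (monomial_of f) idx"
  have set_idx: "set idx = range f" and distinct: "distinct idx"
    by (simp_all add: idx_def)
  have nonzero: "0 < monomial_of f i" if "i \<in> range f" for i
    using that by (auto simp: monomial_of_def card_gt_0_iff)
  have "exponent_pattern \<alpha> (monomial_of f) idx"
    unfolding exponent_pattern_def
  proof (intro conjI allI impI)
    show "sorted_wrt (<) idx"
      by (simp add: idx_def)
    fix j assume "j < length \<alpha>"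
    then have "idx ! j \<in> range f"
      using set_idx nth_mem by (metis \<alpha>_def length_map)
    then show "1 \<le> idx ! j"
      using pos by auto
  next
    fix i assume "i \<notin> set idx"
    then show "monomial_of f i = 0"
      using set_idx by (auto simp: monomial_of_def)
  qed (simp_all add: \<alpha>_def)
  moreover have "sum_list \<alpha> = CARD('a)"
  proof -
    have "sum_list \<alpha> = (\<Sum>i\<in>range f. card {v. f v = i})"
      using distinct set_idx by (simp add: \<alpha>_def monomial_of_def sum_list_distinct_conv_sum_set)
    also have "\<dots> = card (\<Union>i\<in>range f. {v. f v = i})"
      by (rule card_UN_disjoint[symmetric]) auto
    also have "(\<Union>i\<in>range f. {v. f v = i}) = UNIV"
      by auto
    finally show ?thesis .
  qed
  moreover have "\<forall>a\<in>set \<alpha>. 0 < a"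
    using nonzero set_idx by (auto simp: \<alpha>_def)
  ultimately show ?thesis
    unfolding compositions_def by blast
qed

lemma strict_max_comp:
  assumes "strict_mono_on A g" and "\<forall>v. p v \<in> A"
  shows "strict_max K (\<lambda>v. g (p v)) \<longleftrightarrow> strict_max K p"
  unfolding strict_max_def using strict_mono_on_less[OF assms(1)] assms(2) by auto

lemma monomial_of_pattern:
  assumes pat: "exponent_pattern \<alpha> m idx" and bound: "\<forall>v. p v < length \<alpha>"
  shows "monomial_of (\<lambda>v. idx ! p v) = m \<longleftrightarrow> (\<forall>j<length \<alpha>. card {v. p v = j} = \<alpha> ! j)"
proof -
  let ?k = "length \<alpha>"
  have len: "length idx = ?k" and exps: "\<forall>j<?k. m (idx ! j) = \<alpha> ! j"
    and outside: "\<forall>i. i \<notin> set idx \<longrightarrow> m i = 0" and "distinct idx"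
    using pat by (auto simp: exponent_pattern_def strict_sorted_iff)
  then have inj: "inj_on ((!) idx) {..<?k}"
    by (simp add: inj_on_nth)
  have level: "{v. idx ! p v = idx ! j} = {v. p v = j}" if "j < ?k" for j
    using inj_onD[OF inj] bound that by auto
  have "idx ! p v \<in> set idx" for v
    using bound len by simp
  then have "monomial_of (\<lambda>v. idx ! p v) i = 0" if "i \<notin> set idx" for i
    using that unfolding monomial_of_def by (metis (mono_tags) card.empty empty_Collect_eq)
  then have agree: "monomial_of (\<lambda>v. idx ! p v) i = m i" if "i \<notin> set idx" for i
    using that outside by simp
  have "monomial_of (\<lambda>v. idx ! p v) = m \<longleftrightarrow>
      (\<forall>j<?k. monomial_of (\<lambda>v. idx ! p v) (idx ! j) = m (idx ! j))"
  proof
    assume on_idx: "\<forall>j<?k. monomial_of (\<lambda>v. idx ! p v) (idx ! j) = m (idx ! j)"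
    show "monomial_of (\<lambda>v. idx ! p v) = m"
    proof
      fix i
      show "monomial_of (\<lambda>v. idx ! p v) i = m i"
      proof (cases "i \<in> set idx")
        case True
        then obtain j where "j < ?k" and "i = idx ! j"
          using len by (auto simp: in_set_conv_nth)
        then show ?thesis
          using on_idx by simp
      qed (use agree in simp)
    qed
  qed simp
  then show ?thesis
    using level exps by (simp add: monomial_of_def)
qed

(* The coefficient of m in F(P_B) is the number of rankings of type \<alpha>: the
   relabelling p \<mapsto> idx \<circ> p is a bijection from rankings to generic weights
   with monomial m (compressing the values is its inverse). *)
lemma card_generic_eq_card_ranking:
  fixes B :: "('a::finite) set set"
  assumes bs: "building_set UNIV B" and pat: "exponent_pattern \<alpha> m idx"
  shows "card {f. generic (nestohedron B) f \<and> monomial_of f = m} = card (ranking B \<alpha>)"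
proof -
  let ?k = "length \<alpha>" and ?lift = "\<lambda>p v. idx ! p v"
  have len: "length idx = ?k" and pos: "\<forall>j<?k. 1 \<le> idx ! j"
    and outside: "\<forall>i. i \<notin> set idx \<longrightarrow> m i = 0"
    using pat by (auto simp: exponent_pattern_def)
  have mono: "strict_mono_on {..<?k} ((!) idx)"
    using pat len by (intro strict_mono_onI) (auto simp: exponent_pattern_def sorted_wrt_iff_nth_less)
  have generic_lift: "generic (nestohedron B) (?lift p) \<and> monomial_of (?lift p) = m
      \<longleftrightarrow> p \<in> ranking B \<alpha>" if bound: "\<forall>v. p v < ?k" for p
    using bound pos generic_nestohedron_iff[OF bs] strict_max_comp[OF mono, of p]
      monomial_of_pattern[OF pat bound]
    by (auto simp: ranking_def)
  have "{f. generic (nestohedron B) f \<and> monomial_of f = m} = ?lift ` ranking B \<alpha>"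
  proof (intro set_eqI iffI)
    fix f assume f: "f \<in> {f. generic (nestohedron B) f \<and> monomial_of f = m}"
    have "\<exists>j. j < ?k \<and> f v = idx ! j" for v
    proof -
      have "m (f v) \<noteq> 0"
        using f by (auto simp: monomial_of_def card_gt_0_iff)
      then have "f v \<in> set idx"
        using outside[rule_format, of "f v"] by auto
      then show ?thesis
        using len by (auto simp: in_set_conv_nth)
    qed
    then obtain p where "\<forall>v. p v < ?k \<and> f v = idx ! p v"
      by metis
    then have "\<forall>v. p v < ?k" and "f = ?lift p"
      by (simp_all add: fun_eq_iff)
    then show "f \<in> ?lift ` ranking B \<alpha>"
      using f generic_lift by auto
  next
    fix f assume "f \<in> ?lift ` ranking B \<alpha>"
    then show "f \<in> {f. generic (nestohedron B) f \<and> monomial_of f = m}"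
      using generic_lift by (auto simp: ranking_def)
  qed
  moreover have "inj_on ?lift (ranking B \<alpha>)"
    using strict_mono_on_imp_inj_on[OF mono]
    by (auto simp: inj_on_def ranking_def fun_eq_iff)
  ultimately show ?thesis
    by (simp add: card_image)
qed

theorem mainTheorem2:
  fixes B :: "('a::finite) set set"
  assumes "building_set UNIV B" and "connected_bs UNIV B"
  shows "F_series (nestohedron B) =
           (\<lambda>m. \<Sum>\<alpha>\<in>compositions CARD('a). zeta UNIV B \<alpha> * monomial_qsym \<alpha> m)"
proof
  fix m
  let ?C = "compositions CARD('a)"
  let ?X = "{f. generic (nestohedron B) f \<and> monomial_of f = m}"
  show "F_series (nestohedron B) m = (\<Sum>\<alpha>\<in>?C. zeta UNIV B \<alpha> * monomial_qsym \<alpha> m)"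
  proof (cases "\<exists>\<alpha>\<in>?C. \<exists>idx. exponent_pattern \<alpha> m idx")
    case True
    then obtain \<alpha> idx where \<alpha>: "\<alpha> \<in> ?C" and pat: "exponent_pattern \<alpha> m idx"
      by blast
    have "(\<Sum>\<beta>\<in>?C. zeta UNIV B \<beta> * monomial_qsym \<beta> m) = zeta UNIV B \<alpha>"
      by (rule sum_monomial_qsym_collapse[OF \<alpha> pat])
    also have "\<dots> = card (ranking B \<alpha>)"
      using \<alpha> by (intro zeta_eq_card_ranking[OF assms(1)]) (simp add: compositions_def)
    also have "\<dots> = F_series (nestohedron B) m"
      by (simp add: F_series_eq card_generic_eq_card_ranking[OF assms(1) pat])
    finally show ?thesis ..
  next
    case False
    have X: "?X = {}"
    proof (rule equals0I)
      fix f assume "f \<in> ?X"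
      then show False
        using False exists_exponent_pattern[of f] generic_nestohedron_iff[OF assms(1), of f] by auto
    qed
    have "(\<Sum>\<alpha>\<in>?C. zeta UNIV B \<alpha> * monomial_qsym \<alpha> m) = 0"
      using False by (simp add: monomial_qsym_eq)
    then show ?thesis
      unfolding F_series_eq X by simp
  qed
qed

end
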